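(* Let $G=S_4$ act on a complex abelian variety $A$. Let $H=\langle(12),(34)\rangle\cong\mathbb{Z}_2\times\mathbb{Z}_2$ and $D_4=\langle(12),(34),(13)(24)\rangle$. Let $V$ be the standard $3$-dimensional irreducible representation of $S_4$. Consider the double cosets $H_2=H(23)H$ and $H_3=H(13)(24)H$, and set $q_i=\frac14\sum_{y\in H_i}y$. Then $$A_{H,\widetilde V}=\{z\in A_H:\ q_2(z)=0,\ q_3(z)=-z\}_0=P(A_H/A_{D_4}).$$
   Context: The standard representation $V$ has character values $\chi_V(1)=3$, $\chi_V=1$ on transpositions, $-1$ on double transpositions, $0$ on $3$-cycles, and $-1$ on $4$-cycles. The action of $G$ induces $\mathbb{Q}[G]\to\mathrm{End}_\mathbb{Q}(A)$. For $\alpha\in\mathrm{End}_\mathbb{Q}(A)$, $\mathrm{Im}(\alpha):=\mathrm{Im}(n\alpha)$ for any positive integer $n$ with $n\alpha\in\mathrm{End}(A)$. For $K\le G$ set $p_K=\frac1{|K|}\sum_{k\in K}k$ and $A_K=\mathrm{Im}(p_K)$. Define $P(A_H/A_{D_4}):=\mathrm{Im}(p_H-p_{D_4})$, the complement of $A_{D_4}$ in $A_H$. Define $e_V:=\frac{3}{24}\sum_g\chi_V(g^{-1})g$ and $A_{H,\widetilde V}:=\mathrm{Im}(p_He_V)$. $\{\dots\}_0$ denotes the connected component containing $0$. *)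

theory Defs
  imports "HOL-Analysis.Analysis" "HOL-Combinatorics.Transposition"
begin

type_synonym 'g cvec = "complex ^ 'g"

definition is_lattice :: "'g::finite cvec set \<Rightarrow> bool" where
  "is_lattice L \<longleftrightarrow> 0 \<in> L \<and> (\<forall>x\<in>L. \<forall>y\<in>L. x - y \<in> L)
     \<and> (\<exists>e>0. \<forall>x\<in>L. norm x < e \<longrightarrow> x = 0)
     \<and> span L = UNIV"

definition is_polarization :: "'g::finite cvec set \<Rightarrow> ('g cvec \<Rightarrow> 'g cvec \<Rightarrow> real) \<Rightarrow> bool" where
  "is_polarization L E \<longleftrightarrow> bilinear E
     \<and> (\<forall>v w. E v w = - E w v)
     \<and> (\<forall>v w. E (\<i> *s v) (\<i> *s w) = E v w)
     \<and> (\<forall>v. v \<noteq> 0 \<longrightarrow> E (\<i> *s v) v > 0)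
     \<and> (\<forall>l\<in>L. \<forall>m\<in>L. E l m \<in> \<int>)"

definition abelian_variety :: "'g::finite cvec set \<Rightarrow> bool" where
  "abelian_variety L \<longleftrightarrow> is_lattice L \<and> (\<exists>E. is_polarization L E)"

definition tor :: "'g::finite cvec set \<Rightarrow> 'g cvec \<Rightarrow> 'g cvec set" where
  "tor L v = (\<lambda>l. v + l) ` L"

definition torus_top :: "'g::finite cvec set \<Rightarrow> 'g cvec set topology" where
  "torus_top L = topology (\<lambda>U. U \<subseteq> range (tor L) \<and> open (tor L -` U))"

text \<open>Complex-linear maps C^g -> C^g preserving the lattice: these induce the
  endomorphisms (group homomorphisms, holomorphic) of A.\<close>
definition is_endo :: "'g::finite cvec set \<Rightarrow> ('g cvec \<Rightarrow> 'g cvec) \<Rightarrow> bool" where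
  "is_endo L f \<longleftrightarrow> (\<forall>x y. f (x + y) = f x + f y) \<and> (\<forall>c x. f (c *s x) = c *s f x)
     \<and> f ` L \<subseteq> L"

definition im_endo :: "'g::finite cvec set \<Rightarrow> ('g cvec \<Rightarrow> 'g cvec) \<Rightarrow> 'g cvec set set" where
  "im_endo L f = tor L ` range f"

definition S4 :: "(nat \<Rightarrow> nat) set" where
  "S4 = {\<sigma>. \<sigma> permutes {1,2,3,4}}"

definition gen_sub :: "(nat \<Rightarrow> nat) set \<Rightarrow> (nat \<Rightarrow> nat) set" where
  "gen_sub S = \<Inter>{K. id \<in> K \<and> S \<subseteq> K \<and> (\<forall>a\<in>K. \<forall>b\<in>K. a \<circ> b \<in> K)}"

definition H4 :: "(nat \<Rightarrow> nat) set" where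
  "H4 = gen_sub {Transposition.transpose 1 2, Transposition.transpose 3 4}"

definition D4 :: "(nat \<Rightarrow> nat) set" where
  "D4 = gen_sub {Transposition.transpose 1 2, Transposition.transpose 3 4, Transposition.transpose 1 3 \<circ> Transposition.transpose 2 4}"

definition double_coset :: "(nat \<Rightarrow> nat) set \<Rightarrow> (nat \<Rightarrow> nat) \<Rightarrow> (nat \<Rightarrow> nat) set" where
  "double_coset K x = {h \<circ> x \<circ> h' | h h'. h \<in> K \<and> h' \<in> K}"

definition moved :: "(nat \<Rightarrow> nat) \<Rightarrow> nat" where
  "moved g = card {i \<in> {1,2,3,4::nat}. g i \<noteq> i}"

text \<open>Character of the standard 3-dimensional representation V, by conjugacy class:
  identity 3, transpositions 1, double transpositions -1, 3-cycles 0, 4-cycles -1.\<close>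
definition chiV :: "(nat \<Rightarrow> nat) \<Rightarrow> int" where
  "chiV g = (if g = id then 3
             else if moved g = 2 then 1
             else if moved g = 4 \<and> g \<circ> g = id then -1
             else if moved g = 3 then 0
             else -1)"

definition S4_action :: "'g::finite cvec set \<Rightarrow> ((nat \<Rightarrow> nat) \<Rightarrow> 'g cvec \<Rightarrow> 'g cvec) \<Rightarrow> bool" where
  "S4_action L \<rho> \<longleftrightarrow> (\<forall>\<sigma>\<in>S4. is_endo L (\<rho> \<sigma>))
     \<and> \<rho> id = id \<and> (\<forall>\<sigma>\<in>S4. \<forall>\<tau>\<in>S4. \<rho> (\<sigma> \<circ> \<tau>) = \<rho> \<sigma> \<circ> \<rho> \<tau>)"

text \<open>Norm map N_K = sum_{k in K} k = |K| p_K.\<close>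
definition normop :: "((nat \<Rightarrow> nat) \<Rightarrow> 'g::finite cvec \<Rightarrow> 'g cvec) \<Rightarrow> (nat \<Rightarrow> nat) set \<Rightarrow> 'g cvec \<Rightarrow> 'g cvec" where
  "normop \<rho> K v = (\<Sum>k\<in>K. \<rho> k v)"

text \<open>A_H = Im(p_H) = Im(|H| p_H).\<close>
definition A_sub :: "'g::finite cvec set \<Rightarrow> ((nat \<Rightarrow> nat) \<Rightarrow> 'g cvec \<Rightarrow> 'g cvec) \<Rightarrow> (nat \<Rightarrow> nat) set \<Rightarrow> 'g cvec set set" where
  "A_sub L \<rho> K = im_endo L (normop \<rho> K)"

text \<open>32 p_H e_V = sum_{h in H} sum_{g in S4} chi_V(g^-1) (h g); A_{H,V~} = Im(p_H e_V).\<close>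
definition A_HV :: "'g::finite cvec set \<Rightarrow> ((nat \<Rightarrow> nat) \<Rightarrow> 'g cvec \<Rightarrow> 'g cvec) \<Rightarrow> 'g cvec set set" where
  "A_HV L \<rho> = im_endo L (\<lambda>v. \<Sum>h\<in>H4. \<Sum>g\<in>S4. of_int (chiV (inv g)) *s \<rho> (h \<circ> g) v)"

text \<open>P(A_H/A_D4) = Im(p_H - p_D4) = Im(8 (p_H - p_D4)) = Im(2 N_H - N_D4).\<close>
definition P_compl :: "'g::finite cvec set \<Rightarrow> ((nat \<Rightarrow> nat) \<Rightarrow> 'g cvec \<Rightarrow> 'g cvec) \<Rightarrow> 'g cvec set set" where
  "P_compl L \<rho> = im_endo L (\<lambda>v. 2 *s normop \<rho> H4 v - normop \<rho> D4 v)"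

text \<open>{z in A_H : q_2 z = 0, q_3 z = -z}, with q_i = 1/4 sum_{y in H_i} y; the
  conditions are imposed via the integral multiples 4 q_i.\<close>
definition Q_set :: "'g::finite cvec set \<Rightarrow> ((nat \<Rightarrow> nat) \<Rightarrow> 'g cvec \<Rightarrow> 'g cvec) \<Rightarrow> 'g cvec set set" where
  "Q_set L \<rho> = {z \<in> A_sub L \<rho> H4. \<exists>v. z = tor L v
      \<and> normop \<rho> (double_coset H4 (Transposition.transpose 2 3)) v \<in> L
      \<and> normop \<rho> (double_coset H4 (Transposition.transpose 1 3 \<circ> Transposition.transpose 2 4)) v + 4 *s v \<in> L}"

end

theory Submission
  imports Defs
begin

text \<open>
  Everything is reduced to identities in the group ring \<open>\<int>[S\<^sub>4]\<close>. Write \<open>N\<^sub>K\<close> for the sum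
  of the elements of \<open>K\<close>, \<open>M = 2N\<^sub>H - N\<^sub>D\<^sub>4 = 8(p\<^sub>H - p\<^sub>D\<^sub>4)\<close> and \<open>\<psi> = 8 - M\<close>. Then
  \<open>N\<^sub>H \<cdot> 8e\<^sub>V = 4M\<close>, so \<open>A\<^sub>H\<^sub>,\<^sub>V = Im M = P(A\<^sub>H/A\<^sub>D\<^sub>4)\<close>. From \<open>M = N\<^sub>H(1 - (13)(24))\<close>,
  \<open>N\<^sub>H\<^sub>2 M = 0\<close> and \<open>N\<^sub>H\<^sub>3 M = -4M\<close>, the connected set \<open>Im M\<close> lies in
  \<open>Q = {z \<in> A\<^sub>H. 4q\<^sub>2 z = 0, 4q\<^sub>3 z = -4z}\<close>, hence in the component of \<open>0\<close>. Conversely,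
  \<open>\<psi> N\<^sub>H = N\<^sub>H\<^sub>3 N\<^sub>H + 4N\<^sub>H\<close> shows that every point of \<open>Q\<close> is the class of some \<open>v\<close> with
  \<open>\<psi> v \<in> L\<close>. As \<open>\<psi>\<close> maps the lattice into itself and \<open>L\<close> is discrete, whether \<open>\<psi> v\<close> lies in
  \<open>\<psi>(L)\<close> is locally constant on such classes; so the component of \<open>0\<close> consists of classes of
  \<open>v\<close> with \<open>\<psi> v = 0\<close>, i.e. \<open>Mv = 8v\<close>, and lies in \<open>Im M\<close>.
\<close>

section \<open>Permutations of $\{1,2,3,4\}$ as lists\<close>

definition perm_of_list :: "nat list \<Rightarrow> nat \<Rightarrow> nat" where
  "perm_of_list xs i = (if 1 \<le> i \<and> i \<le> 4 then xs ! (i - 1) else i)"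

definition id_list :: "nat list" where
  "id_list = [1, 2, 3, 4]"

definition list_comp :: "nat list \<Rightarrow> nat list \<Rightarrow> nat list" where
  "list_comp xs ys = map (\<lambda>i. xs ! (i - 1)) ys"

definition list_inv :: "nat list \<Rightarrow> nat list" where
  "list_inv xs = map (\<lambda>j. hd (filter (\<lambda>i. xs ! (i - 1) = j) [1, 2, 3, 4])) [1, 2, 3, 4]"

definition S4_list :: "nat list list" where
  "S4_list = filter distinct (List.n_lists 4 [1, 2, 3, 4])"

definition H4_list :: "nat list list" where
  "H4_list = [[1,2,3,4], [2,1,3,4], [1,2,4,3], [2,1,4,3]]"

definition D4_list :: "nat list list" where
  "D4_list = [[1,2,3,4], [2,1,3,4], [1,2,4,3], [2,1,4,3], [3,4,1,2], [3,4,2,1], [4,3,1,2], [4,3,2,1]]"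

definition double_coset_list :: "nat list \<Rightarrow> nat list list" where
  "double_coset_list x = [list_comp (list_comp h x) k. h \<leftarrow> H4_list, k \<leftarrow> H4_list]"

definition words_le3 :: "nat list list \<Rightarrow> nat list list" where
  "words_le3 G = id_list # G @ [list_comp a b. a \<leftarrow> G, b \<leftarrow> G]
     @ [list_comp (list_comp a b) c. a \<leftarrow> G, b \<leftarrow> G, c \<leftarrow> G]"

definition moved_list :: "nat list \<Rightarrow> nat" where
  "moved_list xs = length (filter (\<lambda>i. xs ! (i - 1) \<noteq> i) [1, 2, 3, 4])"

definition chi_list :: "nat list \<Rightarrow> int" where
  "chi_list xs = (if xs = id_list then 3
     else if moved_list xs = 2 then 1
     else if moved_list xs = 4 \<and> list_comp xs xs = id_list then -1
     else if moved_list xs = 3 then 0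
     else -1)"

lemma set_S4_list: "set S4_list = {xs. distinct xs \<and> length xs = 4 \<and> set xs \<subseteq> {1, 2, 3, 4}}"
  by (auto simp: S4_list_def set_n_lists)

lemma distinct_S4_list: "distinct S4_list"
  by code_simp

lemma id_list_in_S4_list: "id_list \<in> set S4_list"
  by code_simp

lemma list_comp_in_S4_list: "\<forall>x\<in>set S4_list. \<forall>y\<in>set S4_list. list_comp x y \<in> set S4_list"
  by code_simp

lemma list_inv_in_S4_list:
  "\<forall>x\<in>set S4_list. list_inv x \<in> set S4_list
     \<and> list_comp x (list_inv x) = id_list \<and> list_comp (list_inv x) x = id_list"
  by code_simp

lemma list_comp_cancel:
  "\<forall>x\<in>set S4_list. \<forall>z\<in>set S4_list.
     list_comp x (list_comp (list_inv x) z) = z \<and> list_comp (list_inv x) (list_comp x z) = z"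
  by code_simp

lemma H4_list_generated:
  "set H4_list \<subseteq> set S4_list \<and> id_list \<in> set H4_list
   \<and> (\<forall>a\<in>set H4_list. \<forall>b\<in>set H4_list. list_comp a b \<in> set H4_list)
   \<and> set [[2,1,3,4], [1,2,4,3]] \<subseteq> set H4_list
   \<and> set H4_list \<subseteq> set (words_le3 [[2,1,3,4], [1,2,4,3]])"
  by code_simp

lemma D4_list_generated:
  "set D4_list \<subseteq> set S4_list \<and> id_list \<in> set D4_list
   \<and> (\<forall>a\<in>set D4_list. \<forall>b\<in>set D4_list. list_comp a b \<in> set D4_list)
   \<and> set [[2,1,3,4], [1,2,4,3], [3,4,1,2]] \<subseteq> set D4_list
   \<and> set D4_list \<subseteq> set (words_le3 [[2,1,3,4], [1,2,4,3], [3,4,1,2]])"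
  by code_simp

lemma double_coset_list_in_S4_list:
  "set (double_coset_list [1,3,2,4]) \<subseteq> set S4_list \<and> set (double_coset_list [3,4,1,2]) \<subseteq> set S4_list"
  by code_simp

lemma perm_of_list_comp:
  assumes "y \<in> set S4_list"
  shows "perm_of_list (list_comp x y) = perm_of_list x \<circ> perm_of_list y"
proof
  fix i
  show "perm_of_list (list_comp x y) i = (perm_of_list x \<circ> perm_of_list y) i"
  proof (cases "1 \<le> i \<and> i \<le> 4")
    case True
    then have len: "i - 1 < length y" and "set y \<subseteq> {1, 2, 3, 4}"
      using assms by (auto simp: set_S4_list)
    then have "1 \<le> y ! (i - 1) \<and> y ! (i - 1) \<le> 4"
      using nth_mem by fastforce
    then show ?thesis
      using True len by (auto simp: perm_of_list_def list_comp_def)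
  next
    case False
    then show ?thesis by (auto simp: perm_of_list_def)
  qed
qed

lemma perm_of_list_id: "perm_of_list id_list = id"
proof
  fix i :: nat
  show "perm_of_list id_list i = id i"
    by (cases "i \<in> {1, 2, 3, 4}") (auto simp: perm_of_list_def id_list_def)
qed

lemma perm_of_list_eqI:
  assumes "\<And>i. i \<in> {1, 2, 3, 4} \<Longrightarrow> f i = perm_of_list xs i" and "\<And>i. i \<notin> {1, 2, 3, 4} \<Longrightarrow> f i = i"
  shows "f = perm_of_list xs"
proof
  fix i
  show "f i = perm_of_list xs i"
    using assms by (cases "i \<in> {1, 2, 3, 4}") (auto simp: perm_of_list_def)
qed

lemma inj_on_perm_of_list: "inj_on perm_of_list (set S4_list)"
proof (rule inj_onI)
  fix x y assume x: "x \<in> set S4_list" and y: "y \<in> set S4_list" and eq: "perm_of_list x = perm_of_list y"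
  show "x = y"
  proof (rule nth_equalityI)
    show "length x = length y" using x y by (simp add: set_S4_list)
    fix j assume "j < length x"
    then have "perm_of_list x (j + 1) = x ! j" "perm_of_list y (j + 1) = y ! j"
      using x y by (auto simp: set_S4_list perm_of_list_def)
    then show "x ! j = y ! j" using eq by metis
  qed
qed

lemma perm_of_list_inv:
  assumes x: "x \<in> set S4_list"
  shows "perm_of_list x \<circ> perm_of_list (list_inv x) = id" "perm_of_list (list_inv x) \<circ> perm_of_list x = id"
proof -
  have y: "list_inv x \<in> set S4_list" and "list_comp x (list_inv x) = id_list" "list_comp (list_inv x) x = id_list"
    using x list_inv_in_S4_list by auto
  then show "perm_of_list x \<circ> perm_of_list (list_inv x) = id" "perm_of_list (list_inv x) \<circ> perm_of_list x = id"
    by (metis perm_of_list_comp[OF y, of x] perm_of_list_id, metis perm_of_list_comp[OF x, of "list_inv x"] perm_of_list_id)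
qed

lemma inv_perm_of_list: "x \<in> set S4_list \<Longrightarrow> inv (perm_of_list x) = perm_of_list (list_inv x)"
  using perm_of_list_inv inv_unique_comp by blast

lemma perm_of_list_permutes:
  assumes "x \<in> set S4_list"
  shows "perm_of_list x permutes {1, 2, 3, 4}"
  unfolding permutes_def
proof (intro conjI allI impI)
  fix i :: nat assume "i \<notin> {1, 2, 3, 4}"
  then show "perm_of_list x i = i" by (auto simp: perm_of_list_def)
next
  fix y
  show "\<exists>!i. perm_of_list x i = y"
    using perm_of_list_inv[OF assms] by (metis comp_apply id_apply)
qed

lemma S4_eq: "S4 = perm_of_list ` set S4_list"
proof
  show "perm_of_list ` set S4_list \<subseteq> S4"
    unfolding S4_def using perm_of_list_permutes by blast
  show "S4 \<subseteq> perm_of_list ` set S4_list"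
  proof
    fix s assume "s \<in> S4"
    then have s: "s permutes {1, 2, 3, 4}" by (simp add: S4_def)
    let ?xs = "[s 1, s 2, s 3, s 4]"
    have "s = perm_of_list ?xs"
    proof (rule perm_of_list_eqI)
      fix i :: nat assume "i \<in> {1, 2, 3, 4}"
      then show "s i = perm_of_list ?xs i" by (auto simp: perm_of_list_def)
    qed (simp add: permutes_not_in[OF s])
    moreover have "?xs \<in> set S4_list"
      using permutes_in_image[OF s] permutes_inj[OF s] by (simp add: set_S4_list inj_eq)
    ultimately show "s \<in> perm_of_list ` set S4_list" by blast
  qed
qed

lemma perm_of_list_in_S4: "x \<in> set S4_list \<Longrightarrow> perm_of_list x \<in> S4"
  unfolding S4_eq by (rule imageI)

lemma transpose_12: "Transposition.transpose 1 2 = perm_of_list [2,1,3,4]"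
  and transpose_34: "Transposition.transpose 3 4 = perm_of_list [1,2,4,3]"
  and transpose_23: "Transposition.transpose 2 3 = perm_of_list [1,3,2,4]"
  and transpose_13_24: "Transposition.transpose 1 3 \<circ> Transposition.transpose 2 4 = perm_of_list [3,4,1,2]"
  by (rule perm_of_list_eqI; auto simp: perm_of_list_def Transposition.transpose_def)+

lemma gen_sub_least: "id \<in> K \<Longrightarrow> S \<subseteq> K \<Longrightarrow> (\<And>a b. a \<in> K \<Longrightarrow> b \<in> K \<Longrightarrow> a \<circ> b \<in> K) \<Longrightarrow> gen_sub S \<subseteq> K"
  unfolding gen_sub_def by (rule Inter_lower) blast

lemma id_in_gen_sub: "id \<in> gen_sub S"
  and gen_sub_superset: "S \<subseteq> gen_sub S"
  and comp_in_gen_sub: "a \<in> gen_sub S \<Longrightarrow> b \<in> gen_sub S \<Longrightarrow> a \<circ> b \<in> gen_sub S"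
  unfolding gen_sub_def by blast+

lemma gen_sub_perm_of_list:
  assumes K: "set K \<subseteq> set S4_list" "id_list \<in> set K"
      "\<And>a b. a \<in> set K \<Longrightarrow> b \<in> set K \<Longrightarrow> list_comp a b \<in> set K"
    and G: "set G \<subseteq> set K" "set K \<subseteq> set (words_le3 G)"
  shows "gen_sub (perm_of_list ` set G) = perm_of_list ` set K"
proof
  have "a \<circ> b \<in> perm_of_list ` set K" if ab: "a \<in> perm_of_list ` set K" "b \<in> perm_of_list ` set K" for a b
  proof -
    obtain x y where xy: "x \<in> set K" "y \<in> set K" "a = perm_of_list x" "b = perm_of_list y"
      using ab by blast
    then have "a \<circ> b = perm_of_list (list_comp x y)"
      using K(1) perm_of_list_comp by auto
    then show ?thesis using K(3)[OF xy(1,2)] by simp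
  qed
  moreover have "id \<in> perm_of_list ` set K"
    using K(2) perm_of_list_id by (metis imageI)
  ultimately show "gen_sub (perm_of_list ` set G) \<subseteq> perm_of_list ` set K"
    using G(1) by (intro gen_sub_least) auto
next
  let ?g = "\<lambda>x. perm_of_list x \<in> gen_sub (perm_of_list ` set G)"
  have gen: "?g x" if "x \<in> set G" for x
    using that gen_sub_superset by blast
  have comp: "perm_of_list (list_comp a b) = perm_of_list a \<circ> perm_of_list b" if "b \<in> set G" for a b
    using that G(1) K(1) perm_of_list_comp by blast
  have "?g k" if "k \<in> set (words_le3 G)" for k
  proof -
    from that consider "k = id_list" | "k \<in> set G" | a b where "a \<in> set G" "b \<in> set G" "k = list_comp a b"
      | a b c where "a \<in> set G" "b \<in> set G" "c \<in> set G" "k = list_comp (list_comp a b) c"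
      unfolding words_le3_def by auto
    then show ?thesis
      by cases (simp_all add: perm_of_list_id id_in_gen_sub gen comp comp_in_gen_sub)
  qed
  then show "perm_of_list ` set K \<subseteq> gen_sub (perm_of_list ` set G)"
    using G(2) by blast
qed

lemma H4_eq: "H4 = perm_of_list ` set H4_list"
proof -
  have "gen_sub (perm_of_list ` set [[2,1,3,4], [1,2,4,3]]) = perm_of_list ` set H4_list"
    using H4_list_generated by (intro gen_sub_perm_of_list) auto
  then show ?thesis
    unfolding H4_def transpose_12 transpose_34 by simp
qed

lemma D4_eq: "D4 = perm_of_list ` set D4_list"
proof -
  have "gen_sub (perm_of_list ` set [[2,1,3,4], [1,2,4,3], [3,4,1,2]]) = perm_of_list ` set D4_list"
    using D4_list_generated by (intro gen_sub_perm_of_list) auto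
  then show ?thesis
    unfolding D4_def transpose_12 transpose_34 transpose_13_24 by simp
qed

lemma double_coset_eq:
  assumes "x \<in> set S4_list"
  shows "double_coset H4 (perm_of_list x) = perm_of_list ` set (double_coset_list x)"
proof -
  have comp: "perm_of_list (list_comp (list_comp h x) k) = perm_of_list h \<circ> perm_of_list x \<circ> perm_of_list k"
    if "k \<in> set H4_list" for h k
  proof -
    have "k \<in> set S4_list" using that H4_list_generated by auto
    then show ?thesis using assms perm_of_list_comp by simp
  qed
  have "double_coset H4 (perm_of_list x)
      = (\<lambda>(h, k). perm_of_list h \<circ> perm_of_list x \<circ> perm_of_list k) ` (set H4_list \<times> set H4_list)"
    unfolding double_coset_def H4_eq by fastforce
  also have "\<dots> = perm_of_list ` (\<lambda>(h, k). list_comp (list_comp h x) k) ` (set H4_list \<times> set H4_list)"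
    unfolding image_image by (rule image_cong) (auto simp: comp)
  also have "(\<lambda>(h, k). list_comp (list_comp h x) k) ` (set H4_list \<times> set H4_list) = set (double_coset_list x)"
    unfolding double_coset_list_def by auto
  finally show ?thesis .
qed

lemma moved_perm_of_list: "moved (perm_of_list x) = moved_list x"
proof -
  let ?P = "\<lambda>i. x ! (i - 1) \<noteq> i"
  have "{i \<in> {1, 2, 3, 4}. perm_of_list x i \<noteq> i} = {i \<in> set [1, 2, 3, 4]. ?P i}"
    by (auto simp: perm_of_list_def)
  also have "\<dots> = set (filter ?P [1, 2, 3, 4])"
    by (rule set_filter[symmetric])
  finally show ?thesis
    unfolding moved_def moved_list_def by (simp only: distinct_card distinct_filter distinct_upt) simp
qed

lemma chiV_inv_perm_of_list:
  assumes "x \<in> set S4_list"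
  shows "chiV (inv (perm_of_list x)) = chi_list (list_inv x)"
proof -
  let ?y = "list_inv x"
  have y: "?y \<in> set S4_list" using assms list_inv_in_S4_list by blast
  have id_iff: "perm_of_list z = id \<longleftrightarrow> z = id_list" if z: "z \<in> set S4_list" for z
  proof
    assume "perm_of_list z = id"
    then show "z = id_list"
      using inj_onD[OF inj_on_perm_of_list _ z id_list_in_S4_list] perm_of_list_id by simp
  qed (simp add: perm_of_list_id)
  have "perm_of_list ?y \<circ> perm_of_list ?y = perm_of_list (list_comp ?y ?y)"
    using perm_of_list_comp[OF y] by simp
  then have square: "perm_of_list ?y \<circ> perm_of_list ?y = id \<longleftrightarrow> list_comp ?y ?y = id_list"
    using id_iff list_comp_in_S4_list y by simp
  show ?thesis
    unfolding inv_perm_of_list[OF assms] chiV_def chi_list_def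
    by (simp only: id_iff[OF y] moved_perm_of_list square)
qed

section \<open>The integral group ring of $S_4$\<close>

text \<open>An element \<open>\<Sum> c(x) x\<close> of \<open>\<int>[S\<^sub>4]\<close> is represented by its coefficient function \<open>c\<close> on the
  list encodings; \<open>conv\<close> is the product of \<open>\<int>[S\<^sub>4]\<close>.\<close>

definition ind_list :: "nat list list \<Rightarrow> nat list \<Rightarrow> int" where
  "ind_list K x = (if x \<in> set K then 1 else 0)"

definition conv :: "(nat list \<Rightarrow> int) \<Rightarrow> (nat list \<Rightarrow> int) \<Rightarrow> nat list \<Rightarrow> int" where
  "conv a b z = sum_list (map (\<lambda>x. a x * b (list_comp (list_inv x) z)) S4_list)"

definition compl_coeff :: "nat list \<Rightarrow> int" where
  "compl_coeff x = 2 * ind_list H4_list x - ind_list D4_list x"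

definition psi_coeff :: "nat list \<Rightarrow> int" where
  "psi_coeff x = 8 * ind_list [id_list] x - compl_coeff x"

text \<open>In the notation of the header, \<open>M\<close> is \<open>compl_coeff\<close>, \<open>\<psi>\<close> is \<open>psi_coeff\<close>, \<open>8e\<^sub>V\<close> has
  coefficients \<open>chi_list \<circ> list_inv\<close>, and \<open>H\<^sub>2\<close>, \<open>H\<^sub>3\<close> are the double cosets of \<open>(23) = [1,3,2,4]\<close> and \<open>(13)(24) = [3,4,1,2]\<close>.\<close>

lemma conv_NH_chi:
  "\<forall>z\<in>set S4_list. conv (ind_list H4_list) (\<lambda>x. chi_list (list_inv x)) z = 4 * compl_coeff z"
  by code_simp

lemma conv_NH_compl:
  "\<forall>z\<in>set S4_list. conv (ind_list H4_list) (\<lambda>x. ind_list [id_list] x - ind_list [[3,4,1,2]] x) z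
     = compl_coeff z"
  by code_simp

lemma conv_N2_compl:
  "\<forall>z\<in>set S4_list. conv (ind_list (double_coset_list [1,3,2,4])) compl_coeff z = 0"
  by code_simp

lemma conv_N3_compl:
  "\<forall>z\<in>set S4_list. conv (ind_list (double_coset_list [3,4,1,2])) compl_coeff z + 4 * compl_coeff z = 0"
  by code_simp

lemma conv_psi_NH:
  "\<forall>z\<in>set S4_list. conv psi_coeff (ind_list H4_list) z
     = conv (ind_list (double_coset_list [3,4,1,2])) (ind_list H4_list) z + 4 * ind_list H4_list z"
  by code_simp

section \<open>The action of the group ring on $\mathbb{C}^g$\<close>

definition alg_act :: "((nat \<Rightarrow> nat) \<Rightarrow> 'g::finite cvec \<Rightarrow> 'g cvec) \<Rightarrow> (nat list \<Rightarrow> int) \<Rightarrow> 'g cvec \<Rightarrow> 'g cvec" where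
  "alg_act \<rho> c v = (\<Sum>x\<in>set S4_list. of_int (c x) *s \<rho> (perm_of_list x) v)"

lemma scaleR_eq_smult: "r *\<^sub>R (x :: 'g::finite cvec) = complex_of_real r *s x"
proof (rule vec_eq_iff[THEN iffD2], rule allI)
  fix i
  have "(r *\<^sub>R x) $ i = complex_of_real r * x $ i"
    by (simp add: scaleR_conv_of_real[of r "x $ i"])
  then show "(r *\<^sub>R x) $ i = (complex_of_real r *s x) $ i" by simp
qed

lemma is_endo_linear: "is_endo L f \<Longrightarrow> linear f"
  unfolding is_endo_def by (intro linearI) (simp_all add: scaleR_eq_smult)

lemma conv_eq_sum: "conv a b z = (\<Sum>x\<in>set S4_list. a x * b (list_comp (list_inv x) z))"
  unfolding conv_def using distinct_S4_list by (simp add: sum_list_distinct_conv_sum_set)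

context
  fixes L :: "'g::finite cvec set" and \<rho> :: "(nat \<Rightarrow> nat) \<Rightarrow> 'g cvec \<Rightarrow> 'g cvec"
  assumes action: "S4_action L \<rho>"
begin

lemma rho_is_endo: "x \<in> set S4_list \<Longrightarrow> is_endo L (\<rho> (perm_of_list x))"
  using action perm_of_list_in_S4 by (simp add: S4_action_def)

lemma rho_smult: "x \<in> set S4_list \<Longrightarrow> \<rho> (perm_of_list x) (c *s v) = c *s \<rho> (perm_of_list x) v"
  using rho_is_endo by (simp add: is_endo_def)

lemma rho_comp:
  "x \<in> set S4_list \<Longrightarrow> y \<in> set S4_list \<Longrightarrow> \<rho> (perm_of_list (list_comp x y)) v = \<rho> (perm_of_list x) (\<rho> (perm_of_list y) v)"
  using action perm_of_list_in_S4 perm_of_list_comp by (simp add: S4_action_def)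

lemma rho_id_list: "\<rho> (perm_of_list id_list) v = v"
  using action by (simp add: S4_action_def perm_of_list_id)

lemma rho_sum: "x \<in> set S4_list \<Longrightarrow> \<rho> (perm_of_list x) (\<Sum>i\<in>I. f i) = (\<Sum>i\<in>I. \<rho> (perm_of_list x) (f i))"
  using rho_is_endo is_endo_linear linear_sum by blast

lemma linear_alg_act: "linear (alg_act \<rho> a)"
proof (rule linearI)
  fix u w
  show "alg_act \<rho> a (u + w) = alg_act \<rho> a u + alg_act \<rho> a w"
    unfolding alg_act_def
    by (simp add: rho_is_endo[THEN is_endo_linear, THEN linear_add] vector_add_ldistrib sum.distrib)
next
  fix r u
  show "alg_act \<rho> a (r *\<^sub>R u) = r *\<^sub>R alg_act \<rho> a u"
    unfolding alg_act_def scaleR_eq_smult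
    by (simp add: rho_smult vector_smult_assoc sum_cmul[symmetric] mult.commute)
qed

lemma alg_act_smult: "alg_act \<rho> a (c *s u) = c *s alg_act \<rho> a u"
  unfolding alg_act_def by (simp add: rho_smult vector_smult_assoc sum_cmul[symmetric] mult.commute)

lemma alg_act_conv: "alg_act \<rho> a (alg_act \<rho> b v) = alg_act \<rho> (conv a b) v"
proof -
  have "alg_act \<rho> a (alg_act \<rho> b v)
      = (\<Sum>x\<in>set S4_list. \<Sum>y\<in>set S4_list. of_int (a x * b y) *s \<rho> (perm_of_list (list_comp x y)) v)"
    unfolding alg_act_def
    by (intro sum.cong refl)
      (simp add: rho_sum rho_smult rho_comp vector_smult_assoc sum_cmul[symmetric])
  also have "\<dots> = (\<Sum>x\<in>set S4_list. \<Sum>z\<in>set S4_list.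
      of_int (a x * b (list_comp (list_inv x) z)) *s \<rho> (perm_of_list z) v)"
  proof (rule sum.cong[OF refl])
    fix x assume x: "x \<in> set S4_list"
    show "(\<Sum>y\<in>set S4_list. of_int (a x * b y) *s \<rho> (perm_of_list (list_comp x y)) v)
        = (\<Sum>z\<in>set S4_list. of_int (a x * b (list_comp (list_inv x) z)) *s \<rho> (perm_of_list z) v)"
      by (rule sum.reindex_bij_witness[where i = "list_comp (list_inv x)" and j = "list_comp x"])
        (use x list_comp_cancel list_comp_in_S4_list list_inv_in_S4_list in auto)
  qed
  also have "\<dots> = alg_act \<rho> (conv a b) v"
    unfolding alg_act_def conv_eq_sum
    by (subst sum.swap) (simp add: vec_eq_iff sum_distrib_right)
  finally show ?thesis .
qed

lemma alg_act_cong: "(\<And>x. x \<in> set S4_list \<Longrightarrow> a x = b x) \<Longrightarrow> alg_act \<rho> a v = alg_act \<rho> b v"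
  unfolding alg_act_def by (intro sum.cong) auto

lemma alg_act_add: "alg_act \<rho> a v + alg_act \<rho> b v = alg_act \<rho> (\<lambda>x. a x + b x) v"
  unfolding alg_act_def by (simp add: sum.distrib[symmetric] vector_sadd_rdistrib)

lemma alg_act_diff: "alg_act \<rho> a v - alg_act \<rho> b v = alg_act \<rho> (\<lambda>x. a x - b x) v"
  unfolding alg_act_def by (simp add: sum_subtractf[symmetric] vector_sub_rdistrib)

lemma alg_act_scale: "of_int k *s alg_act \<rho> a v = alg_act \<rho> (\<lambda>x. k * a x) v"
  unfolding alg_act_def by (simp add: sum_cmul[symmetric] vector_smult_assoc)

lemma alg_act_eq_0: "(\<And>x. x \<in> set S4_list \<Longrightarrow> a x = 0) \<Longrightarrow> alg_act \<rho> a v = 0"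
  unfolding alg_act_def by (intro sum.neutral) auto

lemma alg_act_unit: "alg_act \<rho> (ind_list [id_list]) v = v"
proof -
  have "alg_act \<rho> (ind_list [id_list]) v = (\<Sum>x\<in>set S4_list. if x = id_list then \<rho> (perm_of_list x) v else 0)"
    unfolding alg_act_def ind_list_def by (intro sum.cong) auto
  also have "\<dots> = v"
    using id_list_in_S4_list rho_id_list by simp
  finally show ?thesis .
qed

lemma normop_eq_alg_act:
  assumes "set K \<subseteq> set S4_list"
  shows "normop \<rho> (perm_of_list ` set K) v = alg_act \<rho> (ind_list K) v"
proof -
  have "normop \<rho> (perm_of_list ` set K) v = (\<Sum>x\<in>set K. \<rho> (perm_of_list x) v)"
    unfolding normop_def using inj_on_subset[OF inj_on_perm_of_list assms] by (simp add: sum.reindex)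
  also have "\<dots> = (\<Sum>x\<in>set S4_list. if x \<in> set K then \<rho> (perm_of_list x) v else 0)"
    using assms by (simp add: sum.inter_restrict[symmetric] Int_absorb1)
  also have "\<dots> = alg_act \<rho> (ind_list K) v"
    unfolding alg_act_def ind_list_def by (intro sum.cong) auto
  finally show ?thesis .
qed

end

section \<open>Lattices and the complex torus\<close>

context
  fixes L :: "'g::finite cvec set"
  assumes lattice: "is_lattice L"
begin

lemma lattice_zero: "0 \<in> L"
  using lattice by (simp add: is_lattice_def)

lemma lattice_diff: "x \<in> L \<Longrightarrow> y \<in> L \<Longrightarrow> x - y \<in> L"
  using lattice by (simp add: is_lattice_def)

lemma lattice_minus: "x \<in> L \<Longrightarrow> - x \<in> L"
  using lattice_diff[OF lattice_zero] by fastforce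

lemma lattice_add: "x \<in> L \<Longrightarrow> y \<in> L \<Longrightarrow> x + y \<in> L"
  using lattice_diff[of x "- y"] lattice_minus by simp

lemma lattice_sum: "(\<And>i. i \<in> I \<Longrightarrow> f i \<in> L) \<Longrightarrow> (\<Sum>i\<in>I. f i) \<in> L"
  by (induction I rule: infinite_finite_induct) (simp_all add: lattice_zero lattice_add)

lemma lattice_of_int_smult: "x \<in> L \<Longrightarrow> of_int k *s x \<in> L"
proof -
  have nat: "of_nat n *s x \<in> L" if "x \<in> L" for n
    using that by (induction n) (simp_all add: lattice_zero lattice_add vector_sadd_rdistrib)
  show "x \<in> L \<Longrightarrow> of_int k *s x \<in> L"
    by (cases k) (simp_all add: nat vector_smult_lneg lattice_minus del: of_nat_Suc)
qed

lemma lattice_discrete: obtains e where "e > 0" "\<And>x y. x \<in> L \<Longrightarrow> y \<in> L \<Longrightarrow> dist x y < e \<Longrightarrow> x = y"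
proof -
  obtain e where "e > 0" "\<forall>x\<in>L. norm x < e \<longrightarrow> x = 0"
    using lattice by (auto simp: is_lattice_def)
  then show ?thesis
    using that lattice_diff by (metis dist_norm eq_iff_diff_eq_0)
qed

lemma tor_eq_iff: "tor L x = tor L y \<longleftrightarrow> x - y \<in> L"
proof
  assume "tor L x = tor L y"
  moreover have "x \<in> tor L x"
    unfolding tor_def using lattice_zero by force
  ultimately show "x - y \<in> L"
    unfolding tor_def by auto
next
  assume xy: "x - y \<in> L"
  have "x + l \<in> tor L y" if "l \<in> L" for l
    using lattice_add[OF xy that] unfolding tor_def by (auto intro: image_eqI[where x = "x - y + l"])
  moreover have "y + l \<in> tor L x" if "l \<in> L" for l
    using lattice_add[OF lattice_minus[OF xy] that] unfolding tor_def by (auto intro: image_eqI[where x = "- (x - y) + l"])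
  ultimately show "tor L x = tor L y"
    unfolding tor_def by blast
qed

lemma alg_act_lattice: "S4_action L \<rho> \<Longrightarrow> l \<in> L \<Longrightarrow> alg_act \<rho> a l \<in> L"
  unfolding alg_act_def S4_action_def is_endo_def
  by (intro lattice_sum lattice_of_int_smult) (use perm_of_list_in_S4 in blast)

end

lemma openin_torus_top: "openin (torus_top L) U \<longleftrightarrow> U \<subseteq> range (tor L) \<and> open (tor L -` U)"
proof -
  have "istopology (\<lambda>U. U \<subseteq> range (tor L) \<and> open (tor L -` U))"
    unfolding istopology_def by (auto simp: vimage_Union intro!: open_Union)
  then show ?thesis
    unfolding torus_top_def by (subst topology_inverse') simp_all
qed

lemma topspace_torus_top: "topspace (torus_top L) = range (tor L)"
proof
  show "topspace (torus_top L) \<subseteq> range (tor L)"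
    unfolding topspace_def openin_torus_top by auto
  have "tor L -` range (tor L) = UNIV"
    by auto
  then have "openin (torus_top L) (range (tor L))"
    unfolding openin_torus_top by (simp add: image_mono)
  then show "range (tor L) \<subseteq> topspace (torus_top L)"
    by (rule openin_subset)
qed

lemma continuous_map_tor: "continuous_map euclidean (torus_top L) (tor L)"
  unfolding continuous_map_def topspace_torus_top openin_torus_top by (auto simp: vimage_def)

lemma connectedin_tor_image: "connected X \<Longrightarrow> connectedin (torus_top L) (tor L ` X)"
  by (rule connectedin_continuous_map_image[OF continuous_map_tor]) (simp add: connectedin_iff_connected)

context
  fixes L :: "'g::finite cvec set" and X :: "'g cvec set"
  assumes lattice: "is_lattice L" and saturated: "\<And>x l. x \<in> X \<Longrightarrow> l \<in> L \<Longrightarrow> x + l \<in> X"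
begin

lemma tor_image_memD:
  assumes "tor L v \<in> tor L ` X"
  shows "v \<in> X"
proof -
  obtain x where x: "x \<in> X" and "tor L v = tor L x"
    using assms by blast
  then have "v - x \<in> L"
    using tor_eq_iff[OF lattice] by simp
  then have "x + (v - x) \<in> X"
    by (rule saturated[OF x])
  then show ?thesis by simp
qed

lemma openin_tor_image: "open X \<Longrightarrow> openin (torus_top L) (tor L ` X)"
proof -
  have "tor L -` tor L ` X = X"
    using tor_image_memD by blast
  then show "open X \<Longrightarrow> ?thesis"
    unfolding openin_torus_top by (simp add: image_mono)
qed

end

lemma connectedin_subset_tor_image:
  fixes L :: "'g::finite cvec set"
  assumes lattice: "is_lattice L" and "open U" "open V"
    and sat_U: "\<And>x l. x \<in> U \<Longrightarrow> l \<in> L \<Longrightarrow> x + l \<in> U"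
    and sat_V: "\<And>x l. x \<in> V \<Longrightarrow> l \<in> L \<Longrightarrow> x + l \<in> V"
    and conn: "connectedin (torus_top L) C"
    and cover: "C \<subseteq> tor L ` U \<union> tor L ` V"
    and disjoint: "\<And>v. tor L v \<in> C \<Longrightarrow> v \<in> U \<Longrightarrow> v \<notin> V"
    and meets: "tor L ` U \<inter> C \<noteq> {}"
  shows "C \<subseteq> tor L ` U"
proof -
  have "z \<notin> C" if "z \<in> tor L ` U" "z \<in> tor L ` V" for z
  proof
    obtain v where v: "z = tor L v" "v \<in> U"
      using \<open>z \<in> tor L ` U\<close> by blast
    then have "v \<in> V"
      using \<open>z \<in> tor L ` V\<close> tor_image_memD[OF lattice sat_V] by blast
    moreover assume "z \<in> C"
    ultimately show False
      using disjoint v by blast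
  qed
  then have "tor L ` U \<inter> tor L ` V \<inter> C = {}"
    by blast
  with connectedinD[OF conn openin_tor_image[OF lattice sat_U \<open>open U\<close>]
      openin_tor_image[OF lattice sat_V \<open>open V\<close>] cover _ meets]
  have "tor L ` V \<inter> C = {}"
    by blast
  then show ?thesis
    using cover by blast
qed

lemma saturated_vimage_balls:
  fixes \<psi> :: "'a::real_normed_vector \<Rightarrow> 'b::real_normed_vector"
  assumes lin: "linear \<psi>" and S: "\<And>s l. s \<in> S \<Longrightarrow> l \<in> L \<Longrightarrow> s + \<psi> l \<in> S"
    and v: "v \<in> \<psi> -` (\<Union>s\<in>S. ball s e)" and l: "l \<in> L"
  shows "v + l \<in> \<psi> -` (\<Union>s\<in>S. ball s e)"
proof -
  obtain s where s: "s \<in> S" "dist s (\<psi> v) < e"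
    using v by auto
  have "\<psi> (v + l) \<in> ball (s + \<psi> l) e"
    using s(2) by (simp add: linear_add[OF lin] dist_norm)
  then show ?thesis
    using S[OF s(1) l] by blast
qed

lemma mem_balls_of_discrete_iff:
  fixes L :: "'a::metric_space set"
  assumes "e > 0" and discrete: "\<And>x y. x \<in> L \<Longrightarrow> y \<in> L \<Longrightarrow> dist x y < e \<Longrightarrow> x = y"
    and "S \<subseteq> L" "x \<in> L"
  shows "x \<in> (\<Union>s\<in>S. ball s e) \<longleftrightarrow> x \<in> S"
  using assms by (auto dest: discrete intro!: bexI[of _ x])

lemma lattice_preimage_separation:
  fixes L :: "'g::finite cvec set" and \<psi> :: "'g cvec \<Rightarrow> 'g cvec"
  assumes lattice: "is_lattice L" and lin: "linear \<psi>" and psi_L: "\<And>l. l \<in> L \<Longrightarrow> \<psi> l \<in> L"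
  obtains U V where "open U" "open V"
    "\<And>v l. v \<in> U \<Longrightarrow> l \<in> L \<Longrightarrow> v + l \<in> U" "\<And>v l. v \<in> V \<Longrightarrow> l \<in> L \<Longrightarrow> v + l \<in> V"
    "\<And>v. \<psi> v \<in> L \<Longrightarrow> v \<in> U \<longleftrightarrow> \<psi> v \<in> \<psi> ` L"
    "\<And>v. \<psi> v \<in> L \<Longrightarrow> v \<in> V \<longleftrightarrow> \<psi> v \<in> L - \<psi> ` L"
proof -
  obtain e where e: "e > 0" "\<And>x y. x \<in> L \<Longrightarrow> y \<in> L \<Longrightarrow> dist x y < e \<Longrightarrow> x = y"
    using lattice_discrete[OF lattice] by blast
  define U where "U = \<psi> -` (\<Union>s\<in>\<psi> ` L. ball s e)"
  define V where "V = \<psi> -` (\<Union>s\<in>L - \<psi> ` L. ball s e)"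
  have "continuous (at x) \<psi>" for x
    using lin linear_conv_bounded_linear linear_continuous_at by blast
  then have "open U" "open V"
    unfolding U_def V_def by (intro continuous_open_vimage open_UN ballI open_ball; simp)+
  have "s + \<psi> l \<in> \<psi> ` L" if "s \<in> \<psi> ` L" "l \<in> L" for s l
    using that lattice_add[OF lattice] by (auto simp: linear_add[OF lin, symmetric])
  then have sat_U: "v + l \<in> U" if "v \<in> U" "l \<in> L" for v l
    using that unfolding U_def by (intro saturated_vimage_balls[OF lin]) auto
  have "s + \<psi> l \<in> L - \<psi> ` L" if "s \<in> L - \<psi> ` L" "l \<in> L" for s l
  proof -
    have "s \<noteq> \<psi> l' - \<psi> l" if "l' \<in> L" for l'
      using \<open>s \<in> L - \<psi> ` L\<close> lattice_diff[OF lattice that \<open>l \<in> L\<close>] by (auto simp: linear_diff[OF lin, symmetric])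
    then show ?thesis
      using that lattice_add[OF lattice _ psi_L] by (auto simp: eq_diff_eq)
  qed
  then have sat_V: "v + l \<in> V" if "v \<in> V" "l \<in> L" for v l
    using that unfolding V_def by (intro saturated_vimage_balls[OF lin]) auto
  have in_U: "v \<in> U \<longleftrightarrow> \<psi> v \<in> \<psi> ` L" if "\<psi> v \<in> L" for v
    unfolding U_def using mem_balls_of_discrete_iff[OF e image_subsetI[OF psi_L] that] by simp
  have in_V: "v \<in> V \<longleftrightarrow> \<psi> v \<in> L - \<psi> ` L" if "\<psi> v \<in> L" for v
    unfolding V_def using mem_balls_of_discrete_iff[OF e Diff_subset that] by simp
  show ?thesis
    by (rule that[OF \<open>open U\<close> \<open>open V\<close> sat_U sat_V in_U in_V])
qed

lemma connected_component_tor_subset_kernel: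
  fixes L :: "'g::finite cvec set" and \<psi> :: "'g cvec \<Rightarrow> 'g cvec"
  assumes lattice: "is_lattice L" and lin: "linear \<psi>" and psi_L: "\<And>l. l \<in> L \<Longrightarrow> \<psi> l \<in> L"
    and T: "T \<subseteq> tor L ` (\<psi> -` L)"
  shows "connected_component_of_set (subtopology (torus_top L) T) (tor L 0) \<subseteq> tor L ` (\<psi> -` {0})"
proof -
  let ?C = "connected_component_of_set (subtopology (torus_top L) T) (tor L 0)"
  obtain U V where "open U" "open V"
    and sat_U: "\<And>v l. v \<in> U \<Longrightarrow> l \<in> L \<Longrightarrow> v + l \<in> U" and sat_V: "\<And>v l. v \<in> V \<Longrightarrow> l \<in> L \<Longrightarrow> v + l \<in> V"
    and in_U: "\<And>v. \<psi> v \<in> L \<Longrightarrow> v \<in> U \<longleftrightarrow> \<psi> v \<in> \<psi> ` L"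
    and in_V: "\<And>v. \<psi> v \<in> L \<Longrightarrow> v \<in> V \<longleftrightarrow> \<psi> v \<in> L - \<psi> ` L"
    using lattice_preimage_separation[OF lattice lin psi_L] by blast
  have "?C \<subseteq> T"
    using connected_component_of_subset_topspace[of "subtopology (torus_top L) T" "tor L 0"] by simp
  then have rep: "\<exists>v. z = tor L v \<and> \<psi> v \<in> L" if "z \<in> ?C" for z
    using that T by blast
  have "?C \<subseteq> tor L ` U"
  proof (cases "?C = {}")
    case False
    then have "tor L 0 \<in> topspace (subtopology (torus_top L) T)"
      using connected_component_of_eq_empty by metis
    then have "tor L 0 \<in> ?C"
      by (simp add: connected_component_of_refl)
    moreover have "0 \<in> U"
      using in_U[of 0] linear_0[OF lin] lattice_zero[OF lattice] by auto
    ultimately have meets: "tor L ` U \<inter> ?C \<noteq> {}"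
      by blast
    have conn: "connectedin (torus_top L) ?C"
      using connectedin_connected_component_of[of "subtopology (torus_top L) T"]
      by (simp add: connectedin_subtopology)
    have cover: "?C \<subseteq> tor L ` U \<union> tor L ` V"
    proof
      fix z assume "z \<in> ?C"
      then obtain v where v: "z = tor L v" "\<psi> v \<in> L"
        using rep by blast
      then show "z \<in> tor L ` U \<union> tor L ` V"
        using in_U[OF v(2)] in_V[OF v(2)] by blast
    qed
    have disjoint: "v \<notin> V" if "tor L v \<in> ?C" "v \<in> U" for v
    proof
      obtain w where w: "tor L v = tor L w" "\<psi> w \<in> L"
        using rep[OF \<open>tor L v \<in> ?C\<close>] by blast
      have "tor L w \<in> tor L ` U"
        unfolding w(1)[symmetric] using \<open>v \<in> U\<close> by (rule imageI)
      then have "\<psi> w \<in> \<psi> ` L"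
        using tor_image_memD[OF lattice sat_U] in_U[OF w(2)] by blast
      moreover assume "v \<in> V"
      then have "tor L w \<in> tor L ` V"
        unfolding w(1)[symmetric] by (rule imageI)
      then have "\<psi> w \<notin> \<psi> ` L"
        using tor_image_memD[OF lattice sat_V] in_V[OF w(2)] by blast
      ultimately show False
        by blast
    qed
    show ?thesis
      by (rule connectedin_subset_tor_image[OF lattice \<open>open U\<close> \<open>open V\<close> sat_U sat_V conn cover disjoint meets])
  qed (simp only: empty_subsetI)
  show ?thesis
  proof
    fix z assume z: "z \<in> ?C"
    obtain v where v: "z = tor L v" "\<psi> v \<in> L"
      using rep z by blast
    then have "v \<in> U"
      using \<open>?C \<subseteq> tor L ` U\<close> z tor_image_memD[OF lattice sat_U] by blast
    then obtain l where l: "l \<in> L" "\<psi> v = \<psi> l"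
      using in_U[OF v(2)] by blast
    then have "\<psi> (v - l) = 0" "z = tor L (v - l)"
      using linear_diff[OF lin] tor_eq_iff[OF lattice] v by simp_all
    then show "z \<in> tor L ` (\<psi> -` {0})"
      by blast
  qed
qed

section \<open>The subvarieties in terms of the group ring\<close>

lemma range_smult_eq:
  fixes f :: "'a::field ^ 'n \<Rightarrow> 'a ^ 'm"
  assumes f: "\<And>c v. f (c *s v) = c *s f v" and "c \<noteq> 0"
  shows "range (\<lambda>v. c *s f v) = range f"
proof (intro equalityI subsetI)
  fix y assume "y \<in> range (\<lambda>v. c *s f v)"
  then show "y \<in> range f"
    by (auto simp flip: f)
next
  fix y assume "y \<in> range f"
  then obtain u where "y = f u"
    by blast
  then have "y = c *s f (inverse c *s u)"
    using \<open>c \<noteq> 0\<close> by (simp add: f vector_smult_assoc)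
  then show "y \<in> range (\<lambda>v. c *s f v)"
    by blast
qed

context
  fixes L :: "'g::finite cvec set" and \<rho> :: "(nat \<Rightarrow> nat) \<Rightarrow> 'g cvec \<Rightarrow> 'g cvec"
  assumes action: "S4_action L \<rho>"
begin

lemma normop_H4: "normop \<rho> H4 = alg_act \<rho> (ind_list H4_list)"
  using normop_eq_alg_act[OF action] H4_list_generated by (auto simp: H4_eq)

lemma normop_D4: "normop \<rho> D4 = alg_act \<rho> (ind_list D4_list)"
  using normop_eq_alg_act[OF action] D4_list_generated by (auto simp: D4_eq)

lemma normop_double_coset_23:
  "normop \<rho> (double_coset H4 (Transposition.transpose 2 3)) = alg_act \<rho> (ind_list (double_coset_list [1,3,2,4]))"
proof -
  have "[1,3,2,4] \<in> set S4_list"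
    by (simp add: set_S4_list)
  then show ?thesis
    unfolding transpose_23 double_coset_eq[OF \<open>[1,3,2,4] \<in> set S4_list\<close>]
    using double_coset_list_in_S4_list by (intro ext normop_eq_alg_act[OF action]) blast
qed

lemma normop_double_coset_13_24:
  "normop \<rho> (double_coset H4 (Transposition.transpose 1 3 \<circ> Transposition.transpose 2 4))
     = alg_act \<rho> (ind_list (double_coset_list [3,4,1,2]))"
proof -
  have "[3,4,1,2] \<in> set S4_list"
    by (simp add: set_S4_list)
  then show ?thesis
    unfolding transpose_13_24 double_coset_eq[OF \<open>[3,4,1,2] \<in> set S4_list\<close>]
    using double_coset_list_in_S4_list by (intro ext normop_eq_alg_act[OF action]) blast
qed

lemma P_compl_map: "(\<lambda>v. 2 *s normop \<rho> H4 v - normop \<rho> D4 v) = alg_act \<rho> compl_coeff"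
proof
  fix v
  have "2 *s normop \<rho> H4 v - normop \<rho> D4 v = of_int 2 *s alg_act \<rho> (ind_list H4_list) v - alg_act \<rho> (ind_list D4_list) v"
    by (simp add: normop_H4 normop_D4)
  also have "\<dots> = alg_act \<rho> compl_coeff v"
    unfolding alg_act_scale[OF action] alg_act_diff[OF action] compl_coeff_def ..
  finally show "2 *s normop \<rho> H4 v - normop \<rho> D4 v = alg_act \<rho> compl_coeff v" .
qed

lemma A_HV_map:
  "(\<lambda>v. \<Sum>h\<in>H4. \<Sum>g\<in>S4. of_int (chiV (inv g)) *s \<rho> (h \<circ> g) v) = (\<lambda>v. 4 *s alg_act \<rho> compl_coeff v)"
proof
  fix v
  let ?chi = "\<lambda>x. chi_list (list_inv x)"
  have H: "set H4_list \<subseteq> set S4_list"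
    using H4_list_generated by blast
  note inj_H = inj_on_subset[OF inj_on_perm_of_list H]
  have inner: "(\<Sum>y\<in>set S4_list. of_int (chiV (inv (perm_of_list y))) *s \<rho> (perm_of_list x \<circ> perm_of_list y) v)
      = \<rho> (perm_of_list x) (alg_act \<rho> ?chi v)" if x: "x \<in> set H4_list" for x
  proof -
    have x': "x \<in> set S4_list" using x H by blast
    have "(\<Sum>y\<in>set S4_list. of_int (chiV (inv (perm_of_list y))) *s \<rho> (perm_of_list x \<circ> perm_of_list y) v)
        = (\<Sum>y\<in>set S4_list. \<rho> (perm_of_list x) (of_int (?chi y) *s \<rho> (perm_of_list y) v))"
      using x' by (intro sum.cong refl)
        (simp add: chiV_inv_perm_of_list perm_of_list_comp[symmetric] rho_comp[OF action] rho_smult[OF action])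
    also have "\<dots> = \<rho> (perm_of_list x) (alg_act \<rho> ?chi v)"
      unfolding alg_act_def using x' by (simp add: rho_sum[OF action])
    finally show ?thesis .
  qed
  have "(\<Sum>h\<in>H4. \<Sum>g\<in>S4. of_int (chiV (inv g)) *s \<rho> (h \<circ> g) v)
      = (\<Sum>x\<in>set H4_list. \<Sum>y\<in>set S4_list. of_int (chiV (inv (perm_of_list y))) *s \<rho> (perm_of_list x \<circ> perm_of_list y) v)"
    unfolding H4_eq S4_eq by (simp only: sum.reindex[OF inj_H] sum.reindex[OF inj_on_perm_of_list] comp_def)
  also have "\<dots> = (\<Sum>x\<in>set H4_list. \<rho> (perm_of_list x) (alg_act \<rho> ?chi v))"
    using inner by (rule sum.cong[OF refl])
  also have "\<dots> = normop \<rho> H4 (alg_act \<rho> ?chi v)"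
    unfolding normop_def H4_eq by (simp only: sum.reindex[OF inj_H] comp_def)
  also have "\<dots> = alg_act \<rho> (\<lambda>x. 4 * compl_coeff x) v"
    unfolding normop_H4 alg_act_conv[OF action] using conv_NH_chi by (intro alg_act_cong[OF action]) auto
  also have "\<dots> = 4 *s alg_act \<rho> compl_coeff v"
    using alg_act_scale[OF action, of 4] by simp
  finally show "(\<Sum>h\<in>H4. \<Sum>g\<in>S4. of_int (chiV (inv g)) *s \<rho> (h \<circ> g) v) = 4 *s alg_act \<rho> compl_coeff v" .
qed

lemma A_HV_eq: "A_HV L \<rho> = tor L ` range (alg_act \<rho> compl_coeff)"
  unfolding A_HV_def im_endo_def A_HV_map
  using range_smult_eq[where f = "alg_act \<rho> compl_coeff" and c = 4, OF alg_act_smult[OF action]] by simp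

lemma P_compl_eq: "P_compl L \<rho> = tor L ` range (alg_act \<rho> compl_coeff)"
  unfolding P_compl_def im_endo_def P_compl_map ..

lemma alg_act_psi_coeff: "alg_act \<rho> psi_coeff w = 8 *s w - alg_act \<rho> compl_coeff w"
proof -
  have "psi_coeff = (\<lambda>x. 8 * ind_list [id_list] x - compl_coeff x)"
    by (simp add: fun_eq_iff psi_coeff_def)
  then have "alg_act \<rho> psi_coeff w = of_int 8 *s alg_act \<rho> (ind_list [id_list]) w - alg_act \<rho> compl_coeff w"
    by (simp only: alg_act_scale[OF action] alg_act_diff[OF action])
  then show ?thesis
    by (simp add: alg_act_unit[OF action])
qed

lemma psi_kernel_subset_range: "alg_act \<rho> psi_coeff -` {0} \<subseteq> range (alg_act \<rho> compl_coeff)"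
proof
  fix w assume "w \<in> alg_act \<rho> psi_coeff -` {0}"
  then have "alg_act \<rho> compl_coeff w = 8 *s w"
    using alg_act_psi_coeff by simp
  then have "w = alg_act \<rho> compl_coeff ((1 / 8) *s w)"
    by (simp add: alg_act_smult[OF action] vector_smult_assoc)
  then show "w \<in> range (alg_act \<rho> compl_coeff)"
    by blast
qed

end

context
  fixes L :: "'g::finite cvec set" and \<rho> :: "(nat \<Rightarrow> nat) \<Rightarrow> 'g cvec \<Rightarrow> 'g cvec"
  assumes lattice: "is_lattice L" and action: "S4_action L \<rho>"
begin

lemma Q_set_eq:
  "Q_set L \<rho> = {z \<in> tor L ` range (alg_act \<rho> (ind_list H4_list)). \<exists>v. z = tor L v
      \<and> alg_act \<rho> (ind_list (double_coset_list [1,3,2,4])) v \<in> L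
      \<and> alg_act \<rho> (ind_list (double_coset_list [3,4,1,2])) v + 4 *s v \<in> L}"
  unfolding Q_set_def A_sub_def im_endo_def normop_H4[OF action]
    normop_double_coset_23[OF action] normop_double_coset_13_24[OF action] ..

lemma tor_range_compl_subset_Q_set: "tor L ` range (alg_act \<rho> compl_coeff) \<subseteq> Q_set L \<rho>"
proof
  fix z assume "z \<in> tor L ` range (alg_act \<rho> compl_coeff)"
  then obtain u where z: "z = tor L (alg_act \<rho> compl_coeff u)"
    by blast
  let ?w = "alg_act \<rho> compl_coeff u"
  have "?w = alg_act \<rho> (ind_list H4_list) (alg_act \<rho> (\<lambda>x. ind_list [id_list] x - ind_list [[3,4,1,2]] x) u)"
    unfolding alg_act_conv[OF action] using conv_NH_compl by (intro alg_act_cong[OF action]) auto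
  then have "z \<in> tor L ` range (alg_act \<rho> (ind_list H4_list))"
    unfolding z by (simp only: imageI rangeI)
  moreover have "alg_act \<rho> (ind_list (double_coset_list [1,3,2,4])) ?w = 0"
    unfolding alg_act_conv[OF action] using conv_N2_compl by (intro alg_act_eq_0[OF action]) auto
  moreover have "alg_act \<rho> (ind_list (double_coset_list [3,4,1,2])) ?w + 4 *s ?w = 0"
  proof -
    have "alg_act \<rho> (ind_list (double_coset_list [3,4,1,2])) ?w + of_int 4 *s ?w
        = alg_act \<rho> (\<lambda>x. conv (ind_list (double_coset_list [3,4,1,2])) compl_coeff x + 4 * compl_coeff x) u"
      by (simp only: alg_act_conv[OF action] alg_act_scale[OF action] alg_act_add[OF action])
    also have "\<dots> = 0"
      using conv_N3_compl by (intro alg_act_eq_0[OF action]) auto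
    finally show ?thesis by simp
  qed
  ultimately show "z \<in> Q_set L \<rho>"
    unfolding Q_set_eq using z lattice_zero[OF lattice] by (intro CollectI conjI exI[of _ ?w]) simp_all
qed

lemma Q_set_subset_psi_preimage: "Q_set L \<rho> \<subseteq> tor L ` (alg_act \<rho> psi_coeff -` L)"
proof
  let ?NH = "alg_act \<rho> (ind_list H4_list)" and ?N3 = "alg_act \<rho> (ind_list (double_coset_list [3,4,1,2]))"
    and ?psi = "alg_act \<rho> psi_coeff"
  fix z assume "z \<in> Q_set L \<rho>"
  then obtain u v where zu: "z = tor L (?NH u)" and zv: "z = tor L v" and v: "?N3 v + 4 *s v \<in> L"
    unfolding Q_set_eq by auto
  define l where "l = v - ?NH u"
  have l: "l \<in> L"
    using zu zv tor_eq_iff[OF lattice] l_def by simp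
  have "?psi (?NH u) = alg_act \<rho> (\<lambda>x. conv (ind_list (double_coset_list [3,4,1,2])) (ind_list H4_list) x
      + 4 * ind_list H4_list x) u"
    unfolding alg_act_conv[OF action] using conv_psi_NH by (intro alg_act_cong[OF action]) auto
  also have "\<dots> = ?N3 (?NH u) + of_int 4 *s ?NH u"
    by (simp only: alg_act_conv[OF action] alg_act_scale[OF action] alg_act_add[OF action])
  also have "\<dots> = (?N3 v + 4 *s v) - (?N3 l + 4 *s l)"
    unfolding l_def by (simp add: linear_diff[OF linear_alg_act[OF action]] vector_ssub_ldistrib)
  moreover have "?N3 l + 4 *s l \<in> L"
    using lattice_add[OF lattice alg_act_lattice[OF lattice action l] lattice_of_int_smult[OF lattice l, of 4]]
    by simp
  ultimately have "?psi (?NH u) \<in> L"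
    using lattice_diff[OF lattice v] by simp
  moreover have "?psi v = ?psi (?NH u) + ?psi l"
    unfolding l_def by (simp add: linear_diff[OF linear_alg_act[OF action]])
  ultimately have "?psi v \<in> L"
    using lattice_add[OF lattice] alg_act_lattice[OF lattice action l] by simp
  then show "z \<in> tor L ` (?psi -` L)"
    using zv by blast
qed

end

theorem mainTheorem10:
  fixes L :: "'g::finite cvec set"
    and \<rho> :: "(nat \<Rightarrow> nat) \<Rightarrow> 'g cvec \<Rightarrow> 'g cvec"
  assumes "abelian_variety L"
    and "S4_action L \<rho>"
  shows "A_HV L \<rho> = connected_component_of_set (subtopology (torus_top L) (Q_set L \<rho>)) (tor L 0)
       \<and> connected_component_of_set (subtopology (torus_top L) (Q_set L \<rho>)) (tor L 0) = P_compl L \<rho>"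
proof -
  have lattice: "is_lattice L"
    using assms(1) by (simp add: abelian_variety_def)
  note linear_M = linear_alg_act[OF assms(2), of compl_coeff]
  let ?P = "tor L ` range (alg_act \<rho> compl_coeff)"
  let ?C = "connected_component_of_set (subtopology (torus_top L) (Q_set L \<rho>)) (tor L 0)"
  have "connectedin (torus_top L) ?P"
    by (rule connectedin_tor_image[OF connected_linear_image[OF linear_M connected_UNIV]])
  moreover have "tor L 0 \<in> ?P"
    using linear_0[OF linear_M] by (intro image_eqI[of _ _ "alg_act \<rho> compl_coeff 0"]) simp_all
  ultimately have "?P \<subseteq> ?C"
    using tor_range_compl_subset_Q_set[OF lattice assms(2)]
    by (intro connected_component_of_maximal) (simp_all add: connectedin_subtopology)
  moreover have "?C \<subseteq> ?P"
    using connected_component_tor_subset_kernel[OF lattice linear_alg_act[OF assms(2)]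
        alg_act_lattice[OF lattice assms(2)] Q_set_subset_psi_preimage[OF lattice assms(2)]]
      image_mono[OF psi_kernel_subset_range[OF assms(2)]]
    by (rule order_trans)
  ultimately have "?P = ?C"
    by (rule equalityI)
  then show ?thesis
    by (simp add: A_HV_eq[OF assms(2)] P_compl_eq[OF assms(2)])
qed

end
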